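(* Let $d\geq 1$ be an integer and let $\mathbb{C}^{d(d+1)/2}$ denote the complex vector space whose coordinates are indexed by the pairs $(i,j)$ of integers with $0\leq i<j\leq d$. Define $\phi:(\mathbb{C}^\times)^{d+1}\to\mathbb{C}^{d(d+1)/2}$ by \[ \phi(w_0,\dots,w_d)=\left(\frac{w_i}{w_j}+\frac{w_j}{w_i}\right)_{0\leq i<j\leq d}. \] In the polynomial ring $\mathbb{C}[X_{i,j}\mid 0\leq i<j\leq d]$, write $X_{j,i}=X_{i,j}$, and let $I$ be the ideal generated by the polynomials \[ g(X_{i,j},X_{j,k},X_{i,k})\quad\text{for all pairwise distinct } i,j,k\in\{0,\dots,d\}, \] \[ h(X_{i,j},X_{i,k},X_{i,\ell},X_{j,k},X_{j,\ell},X_{k,\ell})\quad\text{for all pairwise distinct } i,j,k,\ell\in\{0,\dots,d\}. \] Then the image of $\phi$ coincides with the set of common zeros of $I$ in $\mathbb{C}^{d(d+1)/2}$.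
   Context: Here $g(X,Y,Z)=X^2+Y^2+Z^2-XYZ-4$ and \[ h(X_{0,1},X_{0,2},X_{0,3},X_{1,2},X_{1,3},X_{2,3})=\det\begin{bmatrix}2&X_{0,1}&X_{0,2}\\ X_{0,1}&2&X_{1,2}\\ X_{0,3}&X_{1,3}&X_{2,3}\end{bmatrix}. \] *)

theory Defs
  imports Complex_Main
begin

definition g :: "complex \<Rightarrow> complex \<Rightarrow> complex \<Rightarrow> complex" where
  "g X Y Z = X^2 + Y^2 + Z^2 - X*Y*Z - 4"

text \<open>The determinant of the 3x3 matrix with rows (2, X01, X02), (X01, 2, X12), (X03, X13, X23),
  expanded along the first row.\<close>
definition h :: "complex \<Rightarrow> complex \<Rightarrow> complex \<Rightarrow> complex \<Rightarrow> complex \<Rightarrow> complex \<Rightarrow> complex" where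
  "h X01 X02 X03 X12 X13 X23 =
     2 * (2 * X23 - X12 * X13) - X01 * (X01 * X23 - X12 * X03) + X02 * (X01 * X13 - 2 * X03)"

definition coord_space :: "nat \<Rightarrow> (nat \<Rightarrow> nat \<Rightarrow> complex) set" where
  "coord_space d = {x. \<forall>i j. \<not> (i < j \<and> j \<le> d) \<longrightarrow> x i j = 0}"

definition Xs :: "(nat \<Rightarrow> nat \<Rightarrow> complex) \<Rightarrow> nat \<Rightarrow> nat \<Rightarrow> complex" where
  "Xs x i j = (if i < j then x i j else x j i)"

definition phi :: "nat \<Rightarrow> (nat \<Rightarrow> complex) \<Rightarrow> (nat \<Rightarrow> nat \<Rightarrow> complex)" where
  "phi d w = (\<lambda>i j. if i < j \<and> j \<le> d then w i / w j + w j / w i else 0)"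

definition torus :: "nat \<Rightarrow> (nat \<Rightarrow> complex) set" where
  "torus d = {w. (\<forall>i\<le>d. w i \<noteq> 0) \<and> (\<forall>i>d. w i = 0)}"

text \<open>Common zeros of the ideal I = common zeros of its generators.\<close>
definition zero_set_I :: "nat \<Rightarrow> (nat \<Rightarrow> nat \<Rightarrow> complex) set" where
  "zero_set_I d = {x \<in> coord_space d.
     (\<forall>i j k. i \<le> d \<and> j \<le> d \<and> k \<le> d \<and> i \<noteq> j \<and> i \<noteq> k \<and> j \<noteq> k \<longrightarrow>
        g (Xs x i j) (Xs x j k) (Xs x i k) = 0) \<and>
     (\<forall>i j k l. i \<le> d \<and> j \<le> d \<and> k \<le> d \<and> l \<le> d \<and> i \<noteq> j \<and> i \<noteq> k \<and> i \<noteq> l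
        \<and> j \<noteq> k \<and> j \<noteq> l \<and> k \<noteq> l \<longrightarrow>
        h (Xs x i j) (Xs x i k) (Xs x i l) (Xs x j k) (Xs x j l) (Xs x k l) = 0)}"

end

theory Submission
  imports Defs
begin

text \<open>Every complex number is u + 1/u for some u \<noteq> 0. Writing X_0k = u_k + 1/u_k, the relation g on
  (0, j, k) factors into two linear factors in X_jk, with roots u_j/u_k + u_k/u_j and
  u_j u_k + 1/(u_j u_k); so a point of the zero set agrees with \<phi>(1, u_1, ..., u_d) up to replacing
  some u_k by 1/u_k. Fixing one index m with u_m \<noteq> 1, -1, the relations g on (0, m, k) choose these
  inversions, and h on (0, m, a, b), which is linear in X_ab with leading coefficient
  -(u_m - 1/u_m)^2 \<noteq> 0, forces the remaining coordinates. If every u_k is 1 or -1, the two roots of g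
  coincide. The same factorisations show that g and h vanish on the image of \<phi>.\<close>

lemma Xs_commute: "Xs x a b = Xs x b a"
  by (auto simp: Xs_def)

lemma Xs_phi: "a \<noteq> b \<Longrightarrow> a \<le> d \<Longrightarrow> b \<le> d \<Longrightarrow> Xs (phi d w) a b = w a / w b + w b / w a"
  by (auto simp: Xs_def phi_def add.commute)

lemma ex_plus_inverse_eq: "\<exists>u::complex. u \<noteq> 0 \<and> u + 1 / u = X"
proof -
  define u where "u = (X + csqrt (X\<^sup>2 - 4)) / 2"
  have quadratic: "u * u - X * u + 1 = 0"
    unfolding u_def by (simp add: field_simps power2_eq_square) algebra
  then have "u \<noteq> 0" by auto
  with quadratic show ?thesis by (auto simp: field_simps)
qed

lemma g_plus_inverse_factor:
  fixes u v Y :: complex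
  assumes "u \<noteq> 0" "v \<noteq> 0"
  shows "g (u + 1/u) Y (v + 1/v) = (Y - (u/v + v/u)) * (Y - (u*v + 1/(u*v)))"
  using assms unfolding g_def by (simp add: field_simps) algebra

lemma h_plus_inverse_factor:
  fixes u v t Y :: complex
  assumes "u \<noteq> 0" "v \<noteq> 0" "t \<noteq> 0"
  shows "h (u + 1/u) (v + 1/v) (t + 1/t) (u/v + v/u) (u/t + t/u) Y
           = - (u - 1/u)\<^sup>2 * (Y - (v/t + t/v))"
  using assms unfolding h_def by (simp add: field_simps) algebra

lemma g_eq_0_ex_ratio_root:
  fixes u v Y :: complex
  assumes "u \<noteq> 0" "v \<noteq> 0" "g (u + 1/u) Y (v + 1/v) = 0"
  shows "\<exists>s. s \<noteq> 0 \<and> s + 1/s = v + 1/v \<and> Y = u/s + s/u"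
proof -
  have "Y = u/v + v/u \<or> Y = u*v + 1/(u*v)"
    using assms g_plus_inverse_factor[OF assms(1,2)] by simp
  moreover have "u*v + 1/(u*v) = u/(1/v) + (1/v)/u" by simp
  moreover have "1/v + 1/(1/v) = v + 1/v" by (simp add: add.commute)
  ultimately show ?thesis
    using assms(2) by (metis div_by_1 divide_eq_0_iff)
qed

lemma plus_inverse_eq_pm2_if_minus_inverse_eq_0:
  fixes u :: complex
  assumes "u \<noteq> 0" "u - 1/u = 0"
  shows "u + 1/u = 2 \<or> u + 1/u = -2"
proof -
  have "u = 1 \<or> u = -1"
    using assms by (simp add: field_simps power2_eq_1_iff flip: power2_eq_square)
  then show ?thesis by auto
qed

lemma g_ratio_sums:
  fixes a b c :: complex
  assumes "a \<noteq> 0" "b \<noteq> 0" "c \<noteq> 0"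
  shows "g (a/b + b/a) (b/c + c/b) (a/c + c/a) = 0"
  using g_plus_inverse_factor[of "a/b" "a/c" "b/c + c/b"] assms
  by (simp add: field_simps)

lemma h_ratio_sums:
  fixes a b c e :: complex
  assumes "a \<noteq> 0" "b \<noteq> 0" "c \<noteq> 0" "e \<noteq> 0"
  shows "h (a/b + b/a) (a/c + c/a) (a/e + e/a) (b/c + c/b) (b/e + e/b) (c/e + e/c) = 0"
  using h_plus_inverse_factor[of "b/a" "c/a" "e/a" "c/e + e/c"] assms
  by (simp add: field_simps)

lemma phi_image_subset_zero_set_I: "phi d ` torus d \<subseteq> zero_set_I d"
proof
  fix x assume "x \<in> phi d ` torus d"
  then obtain w where w: "w \<in> torus d" and x: "x = phi d w" by blast
  have nz: "\<And>i. i \<le> d \<Longrightarrow> w i \<noteq> 0" using w by (auto simp: torus_def)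
  show "x \<in> zero_set_I d"
    unfolding zero_set_I_def
  proof (intro CollectI conjI allI impI)
    show "x \<in> coord_space d" unfolding x coord_space_def phi_def by auto
  qed (auto simp: x Xs_phi nz g_ratio_sums h_ratio_sums)
qed

lemma zero_set_I_coord_space: "x \<in> zero_set_I d \<Longrightarrow> x \<in> coord_space d"
  by (simp add: zero_set_I_def)

lemma zero_set_I_gD:
  "x \<in> zero_set_I d \<Longrightarrow> i \<le> d \<Longrightarrow> j \<le> d \<Longrightarrow> k \<le> d \<Longrightarrow> i \<noteq> j \<Longrightarrow> i \<noteq> k \<Longrightarrow> j \<noteq> k
    \<Longrightarrow> g (Xs x i j) (Xs x j k) (Xs x i k) = 0"
  by (simp add: zero_set_I_def)

lemma zero_set_I_hD:
  "x \<in> zero_set_I d \<Longrightarrow> i \<le> d \<Longrightarrow> j \<le> d \<Longrightarrow> k \<le> d \<Longrightarrow> l \<le> d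
    \<Longrightarrow> i \<noteq> j \<Longrightarrow> i \<noteq> k \<Longrightarrow> i \<noteq> l \<Longrightarrow> j \<noteq> k \<Longrightarrow> j \<noteq> l \<Longrightarrow> k \<noteq> l
    \<Longrightarrow> h (Xs x i j) (Xs x i k) (Xs x i l) (Xs x j k) (Xs x j l) (Xs x k l) = 0"
  by (simp add: zero_set_I_def)

lemma in_phi_image_if_coords:
  assumes x: "x \<in> coord_space d"
    and nz: "\<And>k. k \<le> d \<Longrightarrow> w k \<noteq> 0"
    and coords: "\<And>a b. a < b \<Longrightarrow> b \<le> d \<Longrightarrow> x a b = w a / w b + w b / w a"
  shows "x \<in> phi d ` torus d"
proof
  show "(\<lambda>k. if k \<le> d then w k else 0) \<in> torus d"
    using nz by (simp add: torus_def)
  show "x = phi d (\<lambda>k. if k \<le> d then w k else 0)"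
    using x coords by (auto simp: fun_eq_iff phi_def coord_space_def)
qed

lemma in_phi_image_if_coords_from_0:
  assumes x: "x \<in> coord_space d"
    and w0: "w 0 = 1"
    and nz: "\<And>k. k \<le> d \<Longrightarrow> w k \<noteq> 0"
    and coords0: "\<And>b. 0 < b \<Longrightarrow> b \<le> d \<Longrightarrow> Xs x 0 b = w b + 1 / w b"
    and coords: "\<And>a b. 0 < a \<Longrightarrow> a < b \<Longrightarrow> b \<le> d \<Longrightarrow> Xs x a b = w a / w b + w b / w a"
  shows "x \<in> phi d ` torus d"
proof (rule in_phi_image_if_coords[OF x nz])
  fix a b :: nat assume ab: "a < b" "b \<le> d"
  then have "x a b = Xs x a b" by (simp add: Xs_def)
  also have "\<dots> = w a / w b + w b / w a"
    using ab coords0[of b] coords[of a b] w0 by (cases "a = 0") (auto simp: add.commute)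
  finally show "x a b = w a / w b + w b / w a" .
qed

lemma zero_set_I_in_phi_image_nondegenerate:
  assumes x: "x \<in> zero_set_I d"
    and m: "0 < m" "m \<le> d" "Xs x 0 m \<noteq> 2" "Xs x 0 m \<noteq> -2"
  shows "x \<in> phi d ` torus d"
proof -
  obtain u where u: "u \<noteq> 0" "u + 1/u = Xs x 0 m"
    using ex_plus_inverse_eq by blast
  have "u - 1/u \<noteq> 0"
    using plus_inverse_eq_pm2_if_minus_inverse_eq_0[OF u(1)] u(2) m(3,4) by auto
  have "\<exists>s. s \<noteq> 0 \<and> s + 1/s = Xs x 0 k \<and> (0 < k \<and> k \<noteq> m \<and> k \<le> d \<longrightarrow> Xs x m k = u/s + s/u)"
    for k
  proof -
    obtain v where v: "v \<noteq> 0" "v + 1/v = Xs x 0 k"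
      using ex_plus_inverse_eq by blast
    show ?thesis
    proof (cases "0 < k \<and> k \<noteq> m \<and> k \<le> d")
      case True
      then have "g (u + 1/u) (Xs x m k) (v + 1/v) = 0"
        using zero_set_I_gD[OF x, of 0 m k] m u v by simp
      then show ?thesis
        using g_eq_0_ex_ratio_root[OF u(1) v(1)] v(2) by metis
    qed (use v in blast)
  qed
  then obtain s where s: "\<And>k. s k \<noteq> 0" "\<And>k. s k + 1/s k = Xs x 0 k"
    and s_m: "\<And>k. 0 < k \<Longrightarrow> k \<noteq> m \<Longrightarrow> k \<le> d \<Longrightarrow> Xs x m k = u / s k + s k / u"
    by metis
  define w where "w = s(0 := 1, m := u)"
  have w_0: "\<And>k. 0 < k \<Longrightarrow> Xs x 0 k = w k + 1 / w k"
    using s u by (simp add: w_def)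
  have w_m: "\<And>k. 0 < k \<Longrightarrow> k \<noteq> m \<Longrightarrow> k \<le> d \<Longrightarrow> Xs x m k = w m / w k + w k / w m"
    using s_m m(1) by (simp add: w_def)
  have w_nz: "\<And>k. w k \<noteq> 0"
    using s u by (simp add: w_def)
  show ?thesis
  proof (rule in_phi_image_if_coords_from_0[OF zero_set_I_coord_space[OF x] _ w_nz w_0])
    show "w 0 = 1" using m(1) by (simp add: w_def)
  next
    fix a b :: nat assume ab: "0 < a" "a < b" "b \<le> d"
    consider "a = m" | "b = m" | "a \<noteq> m" "b \<noteq> m" by blast
    then show "Xs x a b = w a / w b + w b / w a"
    proof cases
      case 1 with ab w_m[of b] show ?thesis by simp
    next
      case 2 with ab w_m[of a] show ?thesis by (simp add: Xs_commute[of x a m] add.commute)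
    next
      case 3
      have "h (Xs x 0 m) (Xs x 0 a) (Xs x 0 b) (Xs x m a) (Xs x m b) (Xs x a b) = 0"
        using zero_set_I_hD[OF x, of 0 m a b] 3 ab m by simp
      then have "h (w m + 1/w m) (w a + 1/w a) (w b + 1/w b) (w m/w a + w a/w m)
          (w m/w b + w b/w m) (Xs x a b) = 0"
        using w_0 w_m 3 ab m by simp
      moreover have "w m = u" by (simp add: w_def)
      ultimately show ?thesis
        using h_plus_inverse_factor[of u "w a" "w b" "Xs x a b"] w_nz u(1) \<open>u - 1/u \<noteq> 0\<close>
        by simp
    qed
  qed
qed

lemma zero_set_I_in_phi_image_degenerate:
  assumes x: "x \<in> zero_set_I d"
    and pm2: "\<And>k. 0 < k \<Longrightarrow> k \<le> d \<Longrightarrow> Xs x 0 k = 2 \<or> Xs x 0 k = -2"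
  shows "x \<in> phi d ` torus d"
proof -
  define w where "w = (\<lambda>k. Xs x 0 k / 2)(0 := 1)"
  have w_pm1: "w k = 1 \<or> w k = -1" if "k \<le> d" for k
    using pm2[of k] that by (cases "k = 0") (auto simp: w_def)
  then have w_nz: "\<And>k. k \<le> d \<Longrightarrow> w k \<noteq> 0" by fastforce
  have w_0: "Xs x 0 k = w k + 1 / w k" if "0 < k" "k \<le> d" for k
    using pm2[OF that] that by (auto simp: w_def)
  show ?thesis
  proof (rule in_phi_image_if_coords_from_0[OF zero_set_I_coord_space[OF x] _ w_nz w_0])
    fix a b :: nat assume ab: "0 < a" "a < b" "b \<le> d"
    have "g (w a + 1/w a) (Xs x a b) (w b + 1/w b) = 0"
      using zero_set_I_gD[OF x, of 0 a b] ab w_0 by simp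
    then have "Xs x a b = w a/w b + w b/w a \<or> Xs x a b = w a * w b + 1/(w a * w b)"
      using g_plus_inverse_factor[OF w_nz w_nz] ab by simp
    moreover have "w a * w b + 1/(w a * w b) = w a/w b + w b/w a"
      using w_pm1[of a] w_pm1[of b] ab by auto
    ultimately show "Xs x a b = w a / w b + w b / w a" by auto
  qed (simp_all add: w_def)
qed

lemma zero_set_I_subset_phi_image: "zero_set_I d \<subseteq> phi d ` torus d"
proof
  fix x assume x: "x \<in> zero_set_I d"
  show "x \<in> phi d ` torus d"
  proof (cases "\<exists>m. 0 < m \<and> m \<le> d \<and> Xs x 0 m \<noteq> 2 \<and> Xs x 0 m \<noteq> -2")
    case True
    then show ?thesis using zero_set_I_in_phi_image_nondegenerate[OF x] by blast
  next
    case False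
    then show ?thesis using zero_set_I_in_phi_image_degenerate[OF x] by blast
  qed
qed

theorem theorem2p5:
  fixes d :: nat
  assumes "d \<ge> 1"
  shows "phi d ` torus d = zero_set_I d"
  using phi_image_subset_zero_set_I zero_set_I_subset_phi_image by blast

end
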